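(* Let $\sigma\in(0,1]$, let $V$ satisfy Assumption (A), and let $\gamma_\sigma,\xi_\sigma>0$ be constants such that $\hat f_\sigma$ is $\gamma_\sigma$-Lipschitz on $\mathbb R^d$ and $\hat f_\sigma\ge\xi_\sigma$ on $\mathbb R^d$. Let $K,m\ge1$ and let $\widetilde Y_{t_0},\dots,\widetilde Y_{t_K}$ be generated by the algorithm below. Then for every $k=0,1,\dots,K$, $$\mathbb E\big[\|\widetilde Y_{t_k}\|_2^2\big]\le\frac{6\gamma_\sigma^2}{\xi_\sigma^2}+3d .$$
   Context: Assumption (A): $V$ is twice continuously differentiable on $\mathbb R^d$ and there is $R>0$ with $V(x)=\|x\|_2^2/2$ for $\|x\|_2>R$. $\hat f_\sigma(x)=\exp(-V(x)/\sigma+\|x\|_2^2/(2\sigma))$. Algorithm: $s=1/K$, $t_k=ks$, $\widetilde Y_{t_0}=0$ and for $k=0,\dots,K-1$, $\widetilde Y_{t_{k+1}}=\widetilde Y_{t_k}+\sigma s\,\tilde b_m(\widetilde Y_{t_k},t_k)+\sqrt{\sigma s}\,\epsilon_{k+1}$, where $\tilde b_m(y,t_k)=\frac{\frac1m\sum_{j=1}^m\nabla\hat f_\sigma(y+\sqrt{(1-t_k)\sigma}Z_{k,j})}{\frac1m\sum_{j=1}^m\hat f_\sigma(y+\sqrt{(1-t_k)\sigma}Z_{k,j})}$, with all $\epsilon_k$ and $Z_{k,j}$ i.i.d. $N(0,\mathbf I_d)$ and mutually independent. *)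

theory Defs
  imports "HOL-Analysis.Analysis" "HOL-Probability.Probability"
begin

definition C2_UNIV :: "('d::euclidean_space \<Rightarrow> real) \<Rightarrow> bool" where
  "C2_UNIV V \<longleftrightarrow> (\<exists>V' :: 'd \<Rightarrow> ('d \<Rightarrow>\<^sub>L real). \<exists>V'' :: 'd \<Rightarrow> ('d \<Rightarrow>\<^sub>L ('d \<Rightarrow>\<^sub>L real)).
      (\<forall>x. (V has_derivative blinfun_apply (V' x)) (at x)) \<and>
      (\<forall>x. (V' has_derivative blinfun_apply (V'' x)) (at x)) \<and>
      continuous_on UNIV V'')"

definition assumption_A :: "('d::euclidean_space \<Rightarrow> real) \<Rightarrow> bool" where
  "assumption_A V \<longleftrightarrow> C2_UNIV V \<and>
     (\<exists>R>0. \<forall>x. norm x > R \<longrightarrow> V x = (norm x)^2 / 2)"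

definition fhat :: "('d::euclidean_space \<Rightarrow> real) \<Rightarrow> real \<Rightarrow> 'd \<Rightarrow> real" where
  "fhat V \<sigma> x = exp (- V x / \<sigma> + (norm x)^2 / (2 * \<sigma>))"

definition grad :: "('d::euclidean_space \<Rightarrow> real) \<Rightarrow> 'd \<Rightarrow> 'd" where
  "grad f x = (SOME D. GDERIV f x :> D)"

definition std_gauss_density :: "'d::euclidean_space \<Rightarrow> ennreal" where
  "std_gauss_density x = ennreal ((2 * pi) powr (- (real DIM('d) / 2)) * exp (- ((norm x)\<^sup>2 / 2)))"

definition btilde :: "('d::euclidean_space \<Rightarrow> real) \<Rightarrow> real \<Rightarrow> nat \<Rightarrow> nat \<Rightarrow>
    (nat \<Rightarrow> nat \<Rightarrow> 'd) \<Rightarrow> 'd \<Rightarrow> nat \<Rightarrow> 'd" where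
  "btilde V \<sigma> K m Z y k =
     (let t = real k / real K;
          pts = (\<lambda>j. y + sqrt ((1 - t) * \<sigma>) *\<^sub>R Z k j)
      in (1 / ((1 / real m) * (\<Sum>j=1..m. fhat V \<sigma> (pts j)))) *\<^sub>R
         ((1 / real m) *\<^sub>R (\<Sum>j=1..m. grad (fhat V \<sigma>) (pts j))))"

text \<open>The algorithm: Y 0 = 0, Y (k+1) = Y k + \<sigma> s btilde(Y k, t_k) + sqrt(\<sigma> s) eps (k+1), s = 1/K.
  eps and Z are given pathwise (for a fixed sample point).\<close>
primrec Yalg :: "('d::euclidean_space \<Rightarrow> real) \<Rightarrow> real \<Rightarrow> nat \<Rightarrow> nat \<Rightarrow>
    (nat \<Rightarrow> 'd) \<Rightarrow> (nat \<Rightarrow> nat \<Rightarrow> 'd) \<Rightarrow> nat \<Rightarrow> 'd" where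
  "Yalg V \<sigma> K m eps Z 0 = 0"
| "Yalg V \<sigma> K m eps Z (Suc k) =
     Yalg V \<sigma> K m eps Z k
     + (\<sigma> * (1 / real K)) *\<^sub>R btilde V \<sigma> K m Z (Yalg V \<sigma> K m eps Z k) k
     + sqrt (\<sigma> * (1 / real K)) *\<^sub>R eps (Suc k)"


end

theory Submission
  imports Defs
begin

text \<open>
  The Lipschitz bound on \<open>fhat\<close> bounds its gradient by \<open>\<gamma>\<close>, so the Monte Carlo drift, a ratio of
  an average of gradients to an average of values \<open>\<ge> \<xi>\<close>, has norm at most \<open>\<gamma> / \<xi>\<close> whatever the
  samples are. After \<open>k \<le> K\<close> steps of size \<open>\<sigma> / K \<le> 1 / K\<close> the iterate is therefore a vector of
  norm \<open>\<le> \<gamma> / \<xi>\<close> plus \<open>sqrt (\<sigma> / K)\<close> times a sum of \<open>k\<close> independent standard Gaussians. By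
  independence and centring the second moment of that sum is \<open>k\<close> times that of one Gaussian,
  which is bounded by \<open>5 d / 2\<close>; the weighted inequality
  \<open>\<parallel>a + b\<parallel>\<^sup>2 \<le> 6 \<parallel>a\<parallel>\<^sup>2 + 6/5 \<parallel>b\<parallel>\<^sup>2\<close> then gives \<open>6 \<gamma>\<^sup>2 / \<xi>\<^sup>2 + 3 d\<close>.
\<close>

section \<open>Gradients of Lipschitz functions\<close>

lemma has_derivative_imp_gderiv:
  fixes f :: "'d::euclidean_space \<Rightarrow> real"
  assumes "(f has_derivative f') (at x)"
  shows "GDERIV f x :> adjoint f' 1"
proof -
  have "linear f'" using assms has_derivative_linear by blast
  then have "f' = (\<lambda>h. h \<bullet> adjoint f' 1)"
    by (simp add: adjoint_clauses(1) fun_eq_iff)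
  with assms show ?thesis unfolding gderiv_def by simp
qed

lemma norm_gderiv_le_lipschitz:
  fixes f :: "'d::euclidean_space \<Rightarrow> real"
  assumes deriv: "GDERIV f x :> D" and lip: "L-lipschitz_on UNIV f"
  shows "norm D \<le> L"
proof -
  define \<phi> where "\<phi> t = f (x + t *\<^sub>R D)" for t :: real
  have "((\<lambda>t. x + t *\<^sub>R D) has_derivative (\<lambda>t. t *\<^sub>R D)) (at 0)"
    by (auto intro!: derivative_eq_intros)
  moreover have "(f has_derivative (\<lambda>h. h \<bullet> D)) (at (x + 0 *\<^sub>R D))"
    using deriv by (simp add: gderiv_def)
  ultimately have "(\<phi> has_derivative (\<lambda>t. (t *\<^sub>R D) \<bullet> D)) (at 0)"
    unfolding \<phi>_def by (rule has_derivative_compose)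
  then have "(\<phi> has_real_derivative D \<bullet> D) (at 0)"
    unfolding has_field_derivative_def by (simp add: mult.commute[of _ "D \<bullet> D"])
  then have lim: "((\<lambda>t. (\<phi> t - \<phi> 0) / (t - 0)) \<longlongrightarrow> D \<bullet> D) (at 0)"
    by (simp add: has_field_derivative_iff)
  have L: "0 \<le> L" using lip lipschitz_on_nonneg by blast
  have "(\<phi> t - \<phi> 0) / (t - 0) \<le> L * norm D" for t
  proof (cases "t = 0")
    case False
    have "\<bar>\<phi> t - \<phi> 0\<bar> \<le> L * (\<bar>t\<bar> * norm D)"
      using lipschitz_onD[OF lip, of "x + t *\<^sub>R D" x] by (simp add: \<phi>_def dist_real_def dist_norm)
    with False have "\<bar>\<phi> t - \<phi> 0\<bar> / \<bar>t\<bar> \<le> L * norm D"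
      by (simp add: divide_le_eq mult.commute mult.left_commute)
    moreover have "(\<phi> t - \<phi> 0) / t \<le> \<bar>\<phi> t - \<phi> 0\<bar> / \<bar>t\<bar>"
      by (metis abs_divide abs_ge_self)
    ultimately show ?thesis by simp
  qed (use L in simp)
  then have "D \<bullet> D \<le> L * norm D"
    using tendsto_upperbound[OF lim] by (simp add: always_eventually)
  then have "norm D * norm D \<le> L * norm D"
    by (simp add: dot_square_norm power2_eq_square)
  with L show ?thesis
    by (metis mult_right_le_imp_le norm_ge_zero order.order_iff_strict)
qed

section \<open>The drift is bounded\<close>

lemma assumption_A_differentiable:
  assumes "assumption_A V"
  shows "V differentiable at x"
  using assms unfolding assumption_A_def C2_UNIV_def differentiable_def by blast

lemma fhat_differentiable:
  assumes "V differentiable at x"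
  shows "fhat V \<sigma> differentiable at x"
proof -
  obtain V' where V': "(V has_derivative V') (at x)"
    using assms by (auto simp: differentiable_def)
  show ?thesis
    unfolding differentiable_def fhat_def divide_inverse
    by (rule exI has_derivative_exp has_derivative_add has_derivative_mult_left
        has_derivative_minus has_derivative_sqnorm_at V')+
qed

lemma norm_grad_fhat_le:
  assumes "assumption_A V" and "\<gamma>-lipschitz_on UNIV (fhat V \<sigma>)"
  shows "norm (grad (fhat V \<sigma>) x) \<le> \<gamma>"
proof -
  obtain f' where "(fhat V \<sigma> has_derivative f') (at x)"
    using fhat_differentiable[OF assumption_A_differentiable[OF assms(1)]]
    by (auto simp: differentiable_def)
  then have "GDERIV (fhat V \<sigma>) x :> adjoint f' 1"
    by (rule has_derivative_imp_gderiv)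
  then have "GDERIV (fhat V \<sigma>) x :> grad (fhat V \<sigma>) x"
    unfolding grad_def by (rule someI)
  then show ?thesis using norm_gderiv_le_lipschitz assms(2) by blast
qed

lemma norm_btilde_le:
  assumes grad_le: "\<And>x. norm (grad (fhat V \<sigma>) x) \<le> \<gamma>"
    and fhat_ge: "\<And>x. \<xi> \<le> fhat V \<sigma> x" and "0 < \<xi>" and "1 \<le> m"
  shows "norm (btilde V \<sigma> K m Z y k) \<le> \<gamma> / \<xi>"
proof -
  define pts where "pts j = y + sqrt ((1 - real k / real K) * \<sigma>) *\<^sub>R Z k j" for j
  define Sf where "Sf = (\<Sum>j=1..m. fhat V \<sigma> (pts j))"
  define Sg where "Sg = (\<Sum>j=1..m. grad (fhat V \<sigma>) (pts j))"
  have m: "0 < real m" using \<open>1 \<le> m\<close> by simp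
  have "(\<Sum>j=1..m. \<xi>) \<le> Sf"
    unfolding Sf_def by (intro sum_mono fhat_ge)
  then have Sf: "real m * \<xi> \<le> Sf" by simp
  have "norm Sg \<le> (\<Sum>j=1..m. norm (grad (fhat V \<sigma>) (pts j)))"
    unfolding Sg_def by (rule norm_sum)
  also have "\<dots> \<le> (\<Sum>j=1..m. \<gamma>)" by (intro sum_mono grad_le)
  finally have Sg: "norm Sg \<le> real m * \<gamma>" by simp
  have "0 \<le> \<gamma>" using grad_le[of y] norm_ge_zero order_trans by blast
  have "btilde V \<sigma> K m Z y k = (1 / Sf) *\<^sub>R Sg"
    using m by (simp add: btilde_def Let_def pts_def Sf_def Sg_def)
  moreover have "0 < Sf" using Sf m \<open>0 < \<xi>\<close> by (smt (verit) mult_pos_pos)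
  ultimately have "norm (btilde V \<sigma> K m Z y k) = norm Sg / Sf"
    by simp
  also have "\<dots> \<le> (real m * \<gamma>) / (real m * \<xi>)"
    using Sf Sg m \<open>0 < \<xi>\<close> \<open>0 \<le> \<gamma>\<close> by (intro frac_le) auto
  finally show ?thesis using m by simp
qed

section \<open>Pathwise decomposition of the iterates\<close>

lemma Yalg_eq_drift_plus_noise:
  assumes drift_le: "\<And>y k. norm (btilde V \<sigma> K m Z y k) \<le> B" and "0 < \<sigma>"
  obtains A where "norm A \<le> real k * (\<sigma> * (1 / real K)) * B"
    and "Yalg V \<sigma> K m eps Z k = A + sqrt (\<sigma> * (1 / real K)) *\<^sub>R (\<Sum>i=1..k. eps i)"
proof (induction k arbitrary: thesis)
  case 0
  then show ?case by simp
next
  case (Suc k)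
  define c where "c = \<sigma> * (1 / real K)"
  obtain A where A: "norm A \<le> real k * c * B"
    and Y: "Yalg V \<sigma> K m eps Z k = A + sqrt c *\<^sub>R (\<Sum>i=1..k. eps i)"
    using Suc.IH unfolding c_def by blast
  define A' where "A' = A + c *\<^sub>R btilde V \<sigma> K m Z (Yalg V \<sigma> K m eps Z k) k"
  have "0 \<le> c" using \<open>0 < \<sigma>\<close> by (simp add: c_def)
  then have "norm A' \<le> norm A + c * B"
    unfolding A'_def using norm_triangle_ineq[of A] drift_le
    by (smt (verit) mult_left_mono norm_scaleR abs_of_nonneg)
  with A have "norm A' \<le> real (Suc k) * c * B"
    by (simp add: ring_distribs)
  moreover have "Yalg V \<sigma> K m eps Z (Suc k) = A' + sqrt c *\<^sub>R (\<Sum>i=1..Suc k. eps i)"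
    by (simp add: Y A'_def c_def algebra_simps)
  ultimately show ?case using Suc.prems unfolding c_def by blast
qed

lemma norm_add_sq_le_weighted:
  fixes a b :: "'a::real_inner"
  assumes "0 < t"
  shows "(norm (a + b))\<^sup>2 \<le> (1 + t) * (norm a)\<^sup>2 + (1 + 1 / t) * (norm b)\<^sup>2"
proof -
  have "a \<bullet> b \<le> norm a * norm b"
    by (rule Cauchy_Schwarz_ineq2[THEN order_trans[OF abs_ge_self]])
  moreover have "2 * (norm a * norm b) \<le> t * (norm a)\<^sup>2 + 1 / t * (norm b)\<^sup>2"
  proof -
    have "0 \<le> (t * norm a - norm b)\<^sup>2 / t" using assms by simp
    also have "\<dots> = t * (norm a)\<^sup>2 - 2 * (norm a * norm b) + 1 / t * (norm b)\<^sup>2"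
      using assms by (simp add: power2_eq_square field_simps)
    finally show ?thesis by simp
  qed
  moreover have "(norm (a + b))\<^sup>2 = (norm a)\<^sup>2 + 2 * (a \<bullet> b) + (norm b)\<^sup>2"
    by (simp add: power2_norm_eq_inner inner_add_left inner_add_right inner_commute)
  ultimately show ?thesis by (simp add: algebra_simps)
qed

lemma elapsed_time_le_one:
  assumes "0 \<le> \<sigma>" "\<sigma> \<le> 1" "k \<le> K"
  shows "real k * (\<sigma> * (1 / real K)) \<le> 1"
proof -
  have "real k * (\<sigma> * (1 / real K)) = \<sigma> * (real k / real K)" by simp
  also have "\<dots> \<le> 1 * 1"
    using assms by (intro mult_mono) (auto simp: divide_le_eq_1)
  finally show ?thesis by simp
qed

lemma norm_Yalg_sq_le:
  assumes drift_le: "\<And>y k. norm (btilde V \<sigma> K m Z y k) \<le> B" and "0 \<le> B"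
    and "0 < \<sigma>" "\<sigma> \<le> 1" "k \<le> K"
  shows "(norm (Yalg V \<sigma> K m eps Z k))\<^sup>2
           \<le> 6 * B\<^sup>2 + 6/5 * (\<sigma> * (1 / real K)) * (norm (\<Sum>i=1..k. eps i))\<^sup>2"
proof -
  define c where "c = \<sigma> * (1 / real K)"
  have "0 \<le> c" using \<open>0 < \<sigma>\<close> by (simp add: c_def)
  have kc: "real k * c \<le> 1"
    using elapsed_time_le_one assms(3-5) by (simp add: c_def)
  obtain A where "norm A \<le> real k * c * B"
    and Y: "Yalg V \<sigma> K m eps Z k = A + sqrt c *\<^sub>R (\<Sum>i=1..k. eps i)"
    using Yalg_eq_drift_plus_noise[OF drift_le \<open>0 < \<sigma>\<close>] unfolding c_def by blast
  moreover have "real k * c * B \<le> B"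
    using mult_right_mono[OF kc \<open>0 \<le> B\<close>] by simp
  ultimately have "norm A \<le> B" by linarith
  then have "(norm A)\<^sup>2 \<le> B\<^sup>2" by (simp add: power_mono)
  moreover have "(norm (sqrt c *\<^sub>R (\<Sum>i=1..k. eps i)))\<^sup>2 = c * (norm (\<Sum>i=1..k. eps i))\<^sup>2"
    using \<open>0 \<le> c\<close> by (simp add: power_mult_distrib)
  ultimately show ?thesis
    using norm_add_sq_le_weighted[of 5 A "sqrt c *\<^sub>R (\<Sum>i=1..k. eps i)"]
    unfolding Y c_def[symmetric] by simp
qed

section \<open>Second moment of a standard Gaussian vector\<close>

definition std_gauss_pdf :: "'d::euclidean_space \<Rightarrow> real" where
  "std_gauss_pdf x = (2 * pi) powr (- (real DIM('d) / 2)) * exp (- ((norm x)\<^sup>2 / 2))"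

lemma std_gauss_density_eq: "std_gauss_density = (\<lambda>x. ennreal (std_gauss_pdf x))"
  by (simp add: fun_eq_iff std_gauss_density_def std_gauss_pdf_def)

lemma std_gauss_pdf_nonneg: "0 \<le> std_gauss_pdf x"
  by (simp add: std_gauss_pdf_def)

lemma std_gauss_pdf_measurable [measurable]: "std_gauss_pdf \<in> borel_measurable borel"
  unfolding std_gauss_pdf_def by measurable

lemma nn_integral_lborel_scaleR:
  fixes g :: "'d::euclidean_space \<Rightarrow> ennreal"
  assumes [measurable]: "g \<in> borel_measurable borel" and "0 < s"
  shows "(\<integral>\<^sup>+x. g x \<partial>lborel) = ennreal (s ^ DIM('d)) * (\<integral>\<^sup>+x. g (s *\<^sub>R x) \<partial>lborel)"
proof -
  have "lborel = density (distr lborel borel (\<lambda>x::'d. s *\<^sub>R x)) (\<lambda>_. ennreal (s ^ DIM('d)))"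
    using lborel_affine[of s "0::'d"] \<open>0 < s\<close> by simp
  then have "(\<integral>\<^sup>+x. g x \<partial>lborel)
      = (\<integral>\<^sup>+x. ennreal (s ^ DIM('d)) * g x \<partial>distr lborel borel (\<lambda>x::'d. s *\<^sub>R x))"
    by (subst nn_integral_density[symmetric]) auto
  also have "\<dots> = (\<integral>\<^sup>+x. ennreal (s ^ DIM('d)) * g (s *\<^sub>R x) \<partial>lborel)"
    by (rule nn_integral_distr) auto
  finally show ?thesis by (simp add: nn_integral_cmult)
qed

lemma nn_integral_std_gauss_pdf:
  assumes "prob_space M" and "distributed M lborel (X :: 'a \<Rightarrow> 'd::euclidean_space) std_gauss_density"
  shows "(\<integral>\<^sup>+x. ennreal (std_gauss_pdf (x::'d)) \<partial>lborel) = 1"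
  using distributed_emeasure[OF assms(2), of UNIV] prob_space.emeasure_space_1[OF assms(1)]
  by (simp add: std_gauss_density_eq)

text \<open>Trading the weight \<open>y = \<parallel>x\<parallel>\<^sup>2\<close> for a slower Gaussian decay (via \<open>z e\<^sup>-\<^sup>z \<le> 1/e\<close>) and
  then rescaling bounds the second moment without computing Gaussian moments coordinatewise.\<close>
lemma mult_exp_neg_half_le:
  fixes q y :: real
  assumes "1 < q"
  shows "y * exp (- (y / 2)) \<le> 2 * q / ((q - 1) * exp 1) * exp (- (y / (2 * q)))"
proof -
  define z where "z = (q - 1) * y / (2 * q)"
  have "z \<le> exp (z - 1)" using exp_ge_add_one_self[of "z - 1"] by simp
  then have z: "z * exp (- z) \<le> 1 / exp 1"
    by (simp add: exp_diff exp_minus field_simps)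
  have "y / 2 = y / (2 * q) + z" and y: "y = 2 * q / (q - 1) * z"
    using assms by (simp_all add: z_def field_simps)
  then have "exp (- (y / 2)) = exp (- (y / (2 * q))) * exp (- z)"
    by (metis exp_add minus_add_distrib)
  with y have "y * exp (- (y / 2)) = 2 * q / (q - 1) * exp (- (y / (2 * q))) * (z * exp (- z))"
    by (simp add: ac_simps)
  also have "\<dots> \<le> 2 * q / (q - 1) * exp (- (y / (2 * q))) * (1 / exp 1)"
    using assms by (intro mult_left_mono[OF z]) simp
  finally show ?thesis by simp
qed

lemma gauss_moment_constant_le:
  assumes "1 \<le> n"
  shows "2 * (real n + 1) / exp 1 * sqrt (1 + 1 / real n) ^ n \<le> 5/2 * real n"
proof -
  have n: "1 \<le> real n" using assms by simp
  have "1 + 1 / real n \<le> exp (1 / real n)" by (rule exp_ge_add_one_self)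
  also have "\<dots> = (exp (1 / (2 * real n)))\<^sup>2"
    by (simp add: power2_eq_square exp_add[symmetric])
  finally have "sqrt (1 + 1 / real n) \<le> exp (1 / (2 * real n))"
    by (simp add: real_le_lsqrt)
  then have "sqrt (1 + 1 / real n) ^ n \<le> exp (1 / (2 * real n)) ^ n"
    by (rule power_mono) simp
  also have "\<dots> = exp (1/2)"
    using n by (simp add: exp_of_nat_mult[symmetric])
  finally have "2 * (real n + 1) / exp 1 * sqrt (1 + 1 / real n) ^ n
      \<le> 2 * (real n + 1) / exp 1 * exp (1/2)"
    by (rule mult_left_mono) simp
  also have "\<dots> = 2 * (real n + 1) / exp (1/2)"
    using exp_add[of "1/2" "1/2::real"] by simp
  also have "\<dots> \<le> 2 * (real n + 1) / (13/8)"
    using exp_lower_Taylor_quadratic[of "1/2::real"]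
    by (intro divide_left_mono) (auto simp: power2_eq_square)
  also have "\<dots> \<le> 5/2 * real n" using n by simp
  finally show ?thesis .
qed

lemma nn_integral_norm_sq_std_gauss_le:
  fixes X :: "'a \<Rightarrow> 'd::euclidean_space"
  assumes "prob_space M" and X: "distributed M lborel X std_gauss_density"
  shows "(\<integral>\<^sup>+\<omega>. ennreal ((norm (X \<omega>))\<^sup>2) \<partial>M) \<le> ennreal (5/2 * real DIM('d))"
proof -
  define d where "d = real DIM('d)"
  have d: "1 \<le> d" unfolding d_def using DIM_positive[where 'a='d] by linarith
  define q where "q = 1 + 1 / d"
  have q: "1 < q" using d by (simp add: q_def)
  define s where "s = sqrt q"
  have s: "0 < s" "s\<^sup>2 = q" using q by (auto simp: s_def)
  define B where "B = 2 * q / ((q - 1) * exp 1)"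
  have "0 \<le> B" using q by (simp add: B_def)
  define c where "c = (2 * pi) powr (- (d / 2))"
  define h where "h x = c * exp (- ((norm x)\<^sup>2 / (2 * q)))" for x :: 'd
  have h_nonneg: "0 \<le> h x" for x by (simp add: h_def c_def)
  have [measurable]: "h \<in> borel_measurable borel" unfolding h_def by measurable
  have h_scaled: "h (s *\<^sub>R x) = std_gauss_pdf x" for x
    using s q by (simp add: h_def c_def std_gauss_pdf_def d_def power_mult_distrib)
  have "(\<integral>\<^sup>+\<omega>. ennreal ((norm (X \<omega>))\<^sup>2) \<partial>M)
      = (\<integral>\<^sup>+x. std_gauss_density (x::'d) * ennreal ((norm x)\<^sup>2) \<partial>lborel)"
    by (rule distributed_nn_integral[OF X, symmetric]) measurable
  also have "\<dots> \<le> (\<integral>\<^sup>+x. ennreal (B * h x) \<partial>lborel)"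
  proof (rule nn_integral_mono)
    fix x :: 'd
    have "std_gauss_pdf x * (norm x)\<^sup>2 = c * ((norm x)\<^sup>2 * exp (- ((norm x)\<^sup>2 / 2)))"
      by (simp add: std_gauss_pdf_def c_def d_def)
    also have "\<dots> \<le> c * (B * exp (- ((norm x)\<^sup>2 / (2 * q))))"
      unfolding B_def by (intro mult_left_mono mult_exp_neg_half_le q) (simp add: c_def)
    also have "\<dots> = B * h x" by (simp add: h_def)
    finally have "ennreal (std_gauss_pdf x * (norm x)\<^sup>2) \<le> ennreal (B * h x)"
      by (rule ennreal_leI)
    moreover have "std_gauss_density x * ennreal ((norm x)\<^sup>2) = ennreal (std_gauss_pdf x * (norm x)\<^sup>2)"
      by (simp add: std_gauss_density_eq ennreal_mult std_gauss_pdf_nonneg)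
    ultimately show "std_gauss_density x * ennreal ((norm x)\<^sup>2) \<le> ennreal (B * h x)"
      by simp
  qed
  also have "\<dots> = ennreal B * (\<integral>\<^sup>+x. ennreal (h x) \<partial>lborel)"
    using \<open>0 \<le> B\<close> h_nonneg by (simp add: ennreal_mult nn_integral_cmult)
  also have "(\<integral>\<^sup>+x. ennreal (h x) \<partial>lborel)
      = ennreal (s ^ DIM('d)) * (\<integral>\<^sup>+x. ennreal (h (s *\<^sub>R x)) \<partial>lborel)"
    by (rule nn_integral_lborel_scaleR[OF _ \<open>0 < s\<close>]) measurable
  also have "ennreal B * (ennreal (s ^ DIM('d)) * (\<integral>\<^sup>+x. ennreal (h (s *\<^sub>R x)) \<partial>lborel))
      = ennreal (B * s ^ DIM('d))"
    using nn_integral_std_gauss_pdf[OF assms] \<open>0 \<le> B\<close> s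
    by (simp add: h_scaled ennreal_mult)
  also have "\<dots> \<le> ennreal (5/2 * real DIM('d))"
  proof (intro ennreal_leI)
    have "B = 2 * (d + 1) / exp 1" using d by (simp add: B_def q_def field_simps)
    then show "B * s ^ DIM('d) \<le> 5/2 * real DIM('d)"
      using gauss_moment_constant_le[of "DIM('d)"] by (simp add: s_def q_def d_def)
  qed
  finally show ?thesis .
qed

lemma integral_inner_std_gauss:
  fixes X :: "'a \<Rightarrow> 'd::euclidean_space"
  assumes "distributed M lborel X std_gauss_density"
  shows "(\<integral>\<omega>. X \<omega> \<bullet> b \<partial>M) = 0"
proof -
  define I where "I = (\<integral>x. std_gauss_pdf x * (x \<bullet> b) \<partial>lborel)"
  have eq_I: "(\<integral>\<omega>. X \<omega> \<bullet> b \<partial>M) = I"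
    unfolding I_def using assms
    by (intro distributed_integral[symmetric]) (auto simp: std_gauss_density_eq std_gauss_pdf_nonneg)
  have "lborel = distr lborel borel (\<lambda>x::'d. - x)"
    using lborel_affine[of "-1" "0::'d"] by (simp add: density_1)
  then have "I = (\<integral>x. std_gauss_pdf x * (x \<bullet> b) \<partial>distr lborel borel (\<lambda>x::'d. - x))"
    unfolding I_def by (rule arg_cong[where f="\<lambda>N. integral\<^sup>L N _"])
  also have "\<dots> = - I"
    by (subst integral_distr) (auto simp: I_def std_gauss_pdf_def)
  finally have "I = 0" by simp
  with eq_I show ?thesis by simp
qed

lemma (in prob_space) std_gauss_norm_sq:
  fixes X :: "'a \<Rightarrow> 'd::euclidean_space"
  assumes X: "distributed M lborel X std_gauss_density"
  shows "integrable M (\<lambda>\<omega>. (norm (X \<omega>))\<^sup>2)"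
    and "(\<integral>\<omega>. (norm (X \<omega>))\<^sup>2 \<partial>M) \<le> 5/2 * real DIM('d)"
proof -
  have [measurable]: "X \<in> borel_measurable M"
    using distributed_measurable[OF X] by (simp add: measurable_lborel2)
  have bound: "(\<integral>\<^sup>+\<omega>. ennreal ((norm (X \<omega>))\<^sup>2) \<partial>M) \<le> ennreal (5/2 * real DIM('d))"
    by (rule nn_integral_norm_sq_std_gauss_le[OF prob_space_axioms X])
  show int: "integrable M (\<lambda>\<omega>. (norm (X \<omega>))\<^sup>2)"
    by (rule integrableI_nonneg) (use bound in \<open>auto simp: top_unique intro: le_less_trans\<close>)
  have "ennreal (\<integral>\<omega>. (norm (X \<omega>))\<^sup>2 \<partial>M) \<le> ennreal (5/2 * real DIM('d))"
    using bound nn_integral_eq_integral[OF int] by simp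
  then show "(\<integral>\<omega>. (norm (X \<omega>))\<^sup>2 \<partial>M) \<le> 5/2 * real DIM('d)"
    by (simp add: ennreal_le_iff)
qed

section \<open>Second moments of sums of independent centred vectors\<close>

context prob_space
begin

lemma integrable_inner_of_norm_sq:
  fixes X :: "'a \<Rightarrow> 'd::euclidean_space"
  assumes [measurable]: "X \<in> borel_measurable M"
    and int: "integrable M (\<lambda>\<omega>. (norm (X \<omega>))\<^sup>2)"
  shows "integrable M (\<lambda>\<omega>. X \<omega> \<bullet> b)"
proof -
  have bound: "norm (X \<omega> \<bullet> b) \<le> norm (norm b * (1 + (norm (X \<omega>))\<^sup>2))" for \<omega>
  proof -
    have "norm (X \<omega>) \<le> 1 + (norm (X \<omega>))\<^sup>2"
      using sum_squares_bound[of "norm (X \<omega>)" 1] norm_ge_zero[of "X \<omega>"]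
      unfolding power2_eq_square by linarith
    then have "norm (X \<omega>) * norm b \<le> (1 + (norm (X \<omega>))\<^sup>2) * norm b"
      by (rule mult_right_mono) simp
    then show ?thesis
      using Cauchy_Schwarz_ineq2[of "X \<omega>" b] by (simp add: abs_of_nonneg mult.commute)
  qed
  have "integrable M (\<lambda>\<omega>. norm b * (1 + (norm (X \<omega>))\<^sup>2))"
    using int by auto
  then show ?thesis
    by (rule Bochner_Integration.integrable_bound[OF _ _ AE_I2[OF bound]]) measurable
qed

text \<open>Coordinatewise, \<open>X i \<bullet> X j\<close> is a sum of products of independent centred real variables.\<close>
lemma indep_centred_inner:
  fixes X :: "'i \<Rightarrow> 'a \<Rightarrow> 'd::euclidean_space"
  assumes ind: "indep_vars (\<lambda>_. borel) X I" and "i \<in> I" "j \<in> I" "i \<noteq> j"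
    and int: "\<And>l b. l \<in> {i, j} \<Longrightarrow> integrable M (\<lambda>\<omega>. X l \<omega> \<bullet> b)"
    and centred: "\<And>b. (\<integral>\<omega>. X i \<omega> \<bullet> b \<partial>M) = 0"
  shows "integrable M (\<lambda>\<omega>. X i \<omega> \<bullet> X j \<omega>)" and "(\<integral>\<omega>. X i \<omega> \<bullet> X j \<omega> \<partial>M) = 0"
proof -
  have ind_b: "indep_vars (\<lambda>_. borel) (\<lambda>l \<omega>. X l \<omega> \<bullet> b) {i, j}" for b
    by (rule indep_vars_compose2[OF indep_vars_subset[OF ind]]) (use assms(2,3) in auto)
  have prod: "(\<Prod>l\<in>{i, j}. X l \<omega> \<bullet> b) = (X i \<omega> \<bullet> b) * (X j \<omega> \<bullet> b)" for \<omega> b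
    using \<open>i \<noteq> j\<close> by simp
  have int_b: "integrable M (\<lambda>\<omega>. (X i \<omega> \<bullet> b) * (X j \<omega> \<bullet> b))" for b
    using indep_vars_integrable[OF _ ind_b int] unfolding prod by simp
  have "(\<integral>\<omega>. (X i \<omega> \<bullet> b) * (X j \<omega> \<bullet> b) \<partial>M) = (\<Prod>l\<in>{i, j}. \<integral>\<omega>. X l \<omega> \<bullet> b \<partial>M)" for b
    using indep_vars_lebesgue_integral[OF _ ind_b int] unfolding prod by simp
  then have integral_b: "(\<integral>\<omega>. (X i \<omega> \<bullet> b) * (X j \<omega> \<bullet> b) \<partial>M) = 0" for b
    using centred \<open>i \<noteq> j\<close> by simp
  have inner_eq: "(\<lambda>\<omega>. X i \<omega> \<bullet> X j \<omega>) = (\<lambda>\<omega>. \<Sum>b\<in>Basis. (X i \<omega> \<bullet> b) * (X j \<omega> \<bullet> b))"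
    by (rule ext) (rule euclidean_inner)
  show "integrable M (\<lambda>\<omega>. X i \<omega> \<bullet> X j \<omega>)"
    unfolding inner_eq by (intro Bochner_Integration.integrable_sum int_b)
  show "(\<integral>\<omega>. X i \<omega> \<bullet> X j \<omega> \<partial>M) = 0"
    unfolding inner_eq by (subst Bochner_Integration.integral_sum) (auto intro: int_b simp: integral_b)
qed

lemma integral_norm_sum_sq_indep:
  fixes X :: "'i \<Rightarrow> 'a \<Rightarrow> 'd::euclidean_space"
  assumes ind: "indep_vars (\<lambda>_. borel) X I" and "finite A" "A \<subseteq> I"
    and int: "\<And>i. i \<in> A \<Longrightarrow> integrable M (\<lambda>\<omega>. (norm (X i \<omega>))\<^sup>2)"
    and centred: "\<And>i b. i \<in> A \<Longrightarrow> (\<integral>\<omega>. X i \<omega> \<bullet> b \<partial>M) = 0"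
  shows "integrable M (\<lambda>\<omega>. (norm (\<Sum>i\<in>A. X i \<omega>))\<^sup>2)"
    and "(\<integral>\<omega>. (norm (\<Sum>i\<in>A. X i \<omega>))\<^sup>2 \<partial>M) = (\<Sum>i\<in>A. \<integral>\<omega>. (norm (X i \<omega>))\<^sup>2 \<partial>M)"
proof -
  have norm_sq: "(\<lambda>\<omega>. (norm (\<Sum>i\<in>A. X i \<omega>))\<^sup>2) = (\<lambda>\<omega>. \<Sum>i\<in>A. \<Sum>j\<in>A. X i \<omega> \<bullet> X j \<omega>)"
    unfolding power2_norm_eq_inner inner_sum_left inner_sum_right by (rule ext) (rule sum.swap)
  have "X i \<in> borel_measurable M" if "i \<in> A" for i
    using ind \<open>A \<subseteq> I\<close> that by (auto simp: indep_vars_def)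
  then have int_b: "integrable M (\<lambda>\<omega>. X i \<omega> \<bullet> b)" if "i \<in> A" for i b
    using integrable_inner_of_norm_sq int that by blast
  have cross: "integrable M (\<lambda>\<omega>. X i \<omega> \<bullet> X j \<omega>) \<and>
      (\<integral>\<omega>. X i \<omega> \<bullet> X j \<omega> \<partial>M) = (if i = j then \<integral>\<omega>. (norm (X i \<omega>))\<^sup>2 \<partial>M else 0)"
    if "i \<in> A" "j \<in> A" for i j
  proof (cases "i = j")
    case True
    then show ?thesis using int[OF \<open>i \<in> A\<close>] by (simp add: power2_norm_eq_inner)
  next
    case False
    then show ?thesis
      using indep_centred_inner[OF ind _ _ False int_b centred] that \<open>A \<subseteq> I\<close> by auto
  qed
  show "integrable M (\<lambda>\<omega>. (norm (\<Sum>i\<in>A. X i \<omega>))\<^sup>2)"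
    unfolding norm_sq using cross by (intro Bochner_Integration.integrable_sum) auto
  have "(\<integral>\<omega>. (norm (\<Sum>i\<in>A. X i \<omega>))\<^sup>2 \<partial>M) = (\<Sum>i\<in>A. \<Sum>j\<in>A. \<integral>\<omega>. X i \<omega> \<bullet> X j \<omega> \<partial>M)"
    unfolding norm_sq using cross
    by (simp add: Bochner_Integration.integral_sum Bochner_Integration.integrable_sum)
  also have "\<dots> = (\<Sum>i\<in>A. \<integral>\<omega>. (norm (X i \<omega>))\<^sup>2 \<partial>M)"
  proof (rule sum.cong[OF refl])
    fix i assume "i \<in> A"
    then have "(\<Sum>j\<in>A. \<integral>\<omega>. X i \<omega> \<bullet> X j \<omega> \<partial>M)
        = (\<Sum>j\<in>A. if i = j then \<integral>\<omega>. (norm (X i \<omega>))\<^sup>2 \<partial>M else 0)"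
      using cross by (intro sum.cong) auto
    with \<open>i \<in> A\<close> \<open>finite A\<close>
    show "(\<Sum>j\<in>A. \<integral>\<omega>. X i \<omega> \<bullet> X j \<omega> \<partial>M) = (\<integral>\<omega>. (norm (X i \<omega>))\<^sup>2 \<partial>M)"
      by simp
  qed
  finally show "(\<integral>\<omega>. (norm (\<Sum>i\<in>A. X i \<omega>))\<^sup>2 \<partial>M) = (\<Sum>i\<in>A. \<integral>\<omega>. (norm (X i \<omega>))\<^sup>2 \<partial>M)" .
qed

lemma norm_sum_std_gauss_sq:
  fixes X :: "'i \<Rightarrow> 'a \<Rightarrow> 'd::euclidean_space"
  assumes "indep_vars (\<lambda>_. borel) X I" and "finite A" "A \<subseteq> I"
    and gauss: "\<And>i. i \<in> A \<Longrightarrow> distributed M lborel (X i) std_gauss_density"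
  shows "integrable M (\<lambda>\<omega>. (norm (\<Sum>i\<in>A. X i \<omega>))\<^sup>2)"
    and "(\<integral>\<omega>. (norm (\<Sum>i\<in>A. X i \<omega>))\<^sup>2 \<partial>M) \<le> real (card A) * (5/2 * real DIM('d))"
proof -
  note moment = integral_norm_sum_sq_indep[OF assms(1-3)
      std_gauss_norm_sq(1)[OF gauss] integral_inner_std_gauss[OF gauss]]
  show "integrable M (\<lambda>\<omega>. (norm (\<Sum>i\<in>A. X i \<omega>))\<^sup>2)" by (rule moment(1))
  have "(\<Sum>i\<in>A. \<integral>\<omega>. (norm (X i \<omega>))\<^sup>2 \<partial>M) \<le> (\<Sum>i\<in>A. 5/2 * real DIM('d))"
    by (intro sum_mono std_gauss_norm_sq(2) gauss)
  then show "(\<integral>\<omega>. (norm (\<Sum>i\<in>A. X i \<omega>))\<^sup>2 \<partial>M) \<le> real (card A) * (5/2 * real DIM('d))"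
    by (simp add: moment(2))
qed

end

lemma (in prob_space) nn_integral_le_affine:
  assumes le: "\<And>\<omega>. f \<omega> \<le> a + b * g \<omega>" and "0 \<le> a" "0 \<le> b"
    and "integrable M g" "\<And>\<omega>. 0 \<le> g \<omega>" "(\<integral>\<omega>. g \<omega> \<partial>M) \<le> c"
  shows "(\<integral>\<^sup>+\<omega>. ennreal (f \<omega>) \<partial>M) \<le> ennreal (a + b * c)"
proof -
  have "(\<integral>\<^sup>+\<omega>. ennreal (f \<omega>) \<partial>M) \<le> (\<integral>\<^sup>+\<omega>. ennreal (a + b * g \<omega>) \<partial>M)"
    by (intro nn_integral_mono ennreal_leI le)
  also have "\<dots> = ennreal (\<integral>\<omega>. a + b * g \<omega> \<partial>M)"
    using assms by (intro nn_integral_eq_integral) auto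
  also have "(\<integral>\<omega>. a + b * g \<omega> \<partial>M) = a + b * (\<integral>\<omega>. g \<omega> \<partial>M)"
    using assms by (simp add: prob_space)
  also have "\<dots> \<le> a + b * c"
    using assms by (simp add: mult_left_mono)
  finally show ?thesis by (simp add: ennreal_leI)
qed

lemma (in prob_space) nn_integral_norm_Yalg_sq_le:
  assumes drift_le: "\<And>Z y j. norm (btilde V \<sigma> K m Z y j) \<le> B" and "0 \<le> B"
    and "0 < \<sigma>" "\<sigma> \<le> 1" "k \<le> K"
    and "integrable M (\<lambda>\<omega>. (norm (\<Sum>i=1..k. eps \<omega> i))\<^sup>2)"
    and "(\<integral>\<omega>. (norm (\<Sum>i=1..k. eps \<omega> i))\<^sup>2 \<partial>M) \<le> real k * C" and "0 \<le> C"
  shows "(\<integral>\<^sup>+\<omega>. ennreal ((norm (Yalg V \<sigma> K m (eps \<omega>) (Z \<omega>) k))\<^sup>2) \<partial>M) \<le> ennreal (6 * B\<^sup>2 + 6/5 * C)"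
proof -
  define c where "c = \<sigma> * (1 / real K)"
  have "0 \<le> c" using \<open>0 < \<sigma>\<close> by (simp add: c_def)
  have "(norm (Yalg V \<sigma> K m (eps \<omega>) (Z \<omega>) k))\<^sup>2
      \<le> 6 * B\<^sup>2 + 6/5 * c * (norm (\<Sum>i=1..k. eps \<omega> i))\<^sup>2" for \<omega>
    unfolding c_def by (rule norm_Yalg_sq_le[OF drift_le assms(2-5)])
  then have "(\<integral>\<^sup>+\<omega>. ennreal ((norm (Yalg V \<sigma> K m (eps \<omega>) (Z \<omega>) k))\<^sup>2) \<partial>M)
      \<le> ennreal (6 * B\<^sup>2 + 6/5 * c * (real k * C))"
    using assms(6,7) \<open>0 \<le> c\<close> by (intro nn_integral_le_affine) auto
  also have "\<dots> \<le> ennreal (6 * B\<^sup>2 + 6/5 * C)"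
  proof (intro ennreal_leI)
    have "real k * c * C \<le> 1 * C"
      using elapsed_time_le_one[of \<sigma> k K] assms(3-5) \<open>0 \<le> C\<close>
      by (intro mult_right_mono) (auto simp: c_def)
    moreover have "6/5 * c * (real k * C) = 6/5 * (real k * c * C)" by (simp add: mult_ac)
    ultimately show "6 * B\<^sup>2 + 6/5 * c * (real k * C) \<le> 6 * B\<^sup>2 + 6/5 * C" by linarith
  qed
  finally show ?thesis .
qed

theorem mainTheorem10:
  fixes V :: "'d::euclidean_space \<Rightarrow> real"
    and M :: "'a measure"
    and G :: "nat + (nat \<times> nat) \<Rightarrow> 'a \<Rightarrow> 'd"
    and \<sigma> \<gamma> \<xi> :: real and K m :: nat
  assumes "0 < \<sigma>" "\<sigma> \<le> 1"
    and "assumption_A V"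
    and "0 < \<gamma>" "0 < \<xi>"
    and "\<gamma>-lipschitz_on UNIV (fhat V \<sigma>)"
    and "\<forall>x. fhat V \<sigma> x \<ge> \<xi>"
    and "K \<ge> 1" "m \<ge> 1"
    and "prob_space M"
    and "prob_space.indep_vars M (\<lambda>_. borel) G
           (Inl ` {1..K} \<union> Inr ` ({..<K} \<times> {1..m}))"
    and "\<forall>i \<in> Inl ` {1..K} \<union> Inr ` ({..<K} \<times> {1..m}). distributed M lborel (G i) std_gauss_density"
  shows "\<forall>k \<le> K. (\<integral>\<^sup>+ \<omega>. ennreal ((norm (Yalg V \<sigma> K m (\<lambda>n. G (Inl n) \<omega>) (\<lambda>k j. G (Inr (k, j)) \<omega>) k))^2) \<partial>M)
                 \<le> ennreal (6 * \<gamma>^2 / \<xi>^2 + 3 * real DIM('d))"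
proof (intro allI impI)
  fix k assume "k \<le> K"
  interpret prob_space M by fact
  have drift_le: "norm (btilde V \<sigma> K m Z y j) \<le> \<gamma> / \<xi>" for Z y j
    using assms by (intro norm_btilde_le norm_grad_fhat_le) auto
  have noise: "Inl ` {1..k} \<subseteq> Inl ` {1..K} \<union> Inr ` ({..<K} \<times> {1..m})"
    using \<open>k \<le> K\<close> by auto
  have "(\<Sum>i=1..k. G (Inl i) \<omega>) = (\<Sum>i\<in>Inl ` {1..k}. G i \<omega>)" for \<omega>
    by (simp add: sum.reindex)
  then have "integrable M (\<lambda>\<omega>. (norm (\<Sum>i=1..k. G (Inl i) \<omega>))\<^sup>2)"
    and "(\<integral>\<omega>. (norm (\<Sum>i=1..k. G (Inl i) \<omega>))\<^sup>2 \<partial>M) \<le> real k * (5/2 * real DIM('d))"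
    using norm_sum_std_gauss_sq[OF assms(11) _ noise] noise assms(12)
    by (auto simp: card_image)
  from nn_integral_norm_Yalg_sq_le[OF drift_le _ assms(1,2) \<open>k \<le> K\<close> this]
  show "(\<integral>\<^sup>+ \<omega>. ennreal ((norm (Yalg V \<sigma> K m (\<lambda>n. G (Inl n) \<omega>) (\<lambda>k j. G (Inr (k, j)) \<omega>) k))^2) \<partial>M)
      \<le> ennreal (6 * \<gamma>^2 / \<xi>^2 + 3 * real DIM('d))"
    using assms(4,5) by (simp add: power_divide)
qed

end
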